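(* For every $t\ge0$, the function \[\alpha\mapsto\inf_{\chi\in\mathcal L^0_{\le1}}\big\{\tilde S^\alpha_t\chi(0)-\psi^\alpha_*(\chi)\big\}\] is Lipschitz on $\mathbb{R}_+$.
   Context: Standing assumptions: $D\ge1$, $\xi:\mathbb{R}^{D\times D}\to\mathbb{R}$ smooth with absolutely convergent power series, convex on the positive semidefinite cone $S^D_+$; $P_1$ compactly supported probability measure on $\mathbb{R}^D$. $S^D$: symmetric matrices with Frobenius product and norm $|\cdot|$, $B(0,1)$ its closed unit ball, $\nabla$ the Frobenius gradient. For $\alpha\ge0$: $\xi_\alpha(x)=\xi(x)+\alpha|x|^2$, $\theta_\alpha(x)=x\cdot\nabla\xi_\alpha(x)-\xi_\alpha(x)$, $\mathcal P^\uparrow_{\xi_\alpha}=\{\mathrm{Law}(\nabla\xi_\alpha(\mathsf q(U)))\}$ with $U$ uniform on $[0,1)$ and $\mathsf q:[0,1)\to S^D_+$ right-continuous nondecreasing ($\mathsf q(v)-\mathsf q(u)\in S^D_+$ for $u\le v$), $|\mathsf q|\le1$ (these are monotone measures on $S^D_+$, on which $\psi$ is defined). $\mathcal L^0_{\le1}$: $1$-Lipschitz $\chi:S^D_+\to\mathbb{R}$ with $\chi(0)=0$. $\tilde S^\alpha_t\chi(0)=\sup_{x\in B(0,1)\cap S^D_+}\{\chi(t\nabla\xi_\alpha(x))-t\theta_\alpha(x)\}$, $\psi^\alpha_*(\chi)=\inf_{\mu\in\mathcal P^\uparrow_{\xi_\alpha}}\{\int\chi\,\mathrm d\mu-\psi(\mu)\}$.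 The functional $\psi$ on monotone measures (laws of $\mathsf q(U)$ for nondecreasing $\mathsf q$) with finite first moment: for finitely supported $\mu=\sum_{k=0}^K(\zeta_{k+1}-\zeta_k)\delta_{q_k}$, $0=\zeta_0<\dots<\zeta_{K+1}=1$, $0=q_{-1}\le q_0<\dots<q_K$ in $S^D_+$, $\psi(\mu)=-\mathbb{E}\log\int\sum_{\alpha\in\mathbb{N}^K}\exp(\sum_{k=0}^K(2q_k-2q_{k-1})^{1/2}z_{\alpha|_k}\cdot\sigma-q_K\cdot\sigma\sigma^\intercal)v_\alpha\,\mathrm dP_1(\sigma)$, where $(z_\beta)$ are i.i.d. standard Gaussian vectors in $\mathbb{R}^D$ indexed by the vertices of the tree $\bigcup_{k=0}^K\mathbb{N}^k$ ($\alpha|_k$ = ancestor of the leaf $\alpha$ at depth $k$) and $(v_\alpha)$ is the Poisson–Dirichlet cascade: children of each depth-$k$ vertex $\beta$ ($k<K$) carry decreasingly ordered points $u_{\beta n}$ of an independent Poisson process with intensity $\zeta_{k+1}x^{-1-\zeta_{k+1}}\mathrm dx$, $w_\alpha=\prod_{k=1}^Ku_{\alpha|_k}$, $v_\alpha=w_\alpha/\sum_\beta w_\beta$; $\psi$ is then extended by continuity, being $1$-Lipschitz for the $1$-Wasserstein distance. *)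

theory Defs
  imports "HOL-Analysis.Analysis" "HOL-Probability.Probability"
begin

text \<open>D x D real matrices are modelled as real^'n^'n ('n a finite type with CARD('n) = D).
 The Frobenius product is the inner product (\<bullet>) on this type and the Frobenius norm is norm.\<close>

definition psd :: "(real^'n^'n) set" where
  "psd = {A. transpose A = A \<and> (\<forall>v. v \<bullet> (A *v v) \<ge> 0)}"

definition loewner_le :: "real^'n^'n \<Rightarrow> real^'n^'n \<Rightarrow> bool" where
  "loewner_le A B \<longleftrightarrow> B - A \<in> psd"

definition monom_mat :: "real^'n^'n \<Rightarrow> ('n \<times> 'n \<Rightarrow> nat) \<Rightarrow> real" where
  "monom_mat x k = (\<Prod>p\<in>UNIV. (x $ fst p $ snd p) ^ k p)"

text \<open>Full Frobenius gradient on R^{DxD} (matrix of partial derivatives) and the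
 Frobenius gradient on S^D (its symmetric part).\<close>
definition full_grad :: "(real^'n^'n \<Rightarrow> real) \<Rightarrow> real^'n^'n \<Rightarrow> real^'n^'n" where
  "full_grad f x = (\<chi> i j. frechet_derivative f (at x) (axis i (axis j 1)))"

definition sgrad :: "(real^'n^'n \<Rightarrow> real) \<Rightarrow> real^'n^'n \<Rightarrow> real^'n^'n" where
  "sgrad f x = (1/2) *\<^sub>R (full_grad f x + transpose (full_grad f x))"

definition xi_a :: "(real^'n^'n \<Rightarrow> real) \<Rightarrow> real \<Rightarrow> real^'n^'n \<Rightarrow> real" where
  "xi_a \<xi> \<alpha> x = \<xi> x + \<alpha> * (norm x)\<^sup>2"

definition theta_a :: "(real^'n^'n \<Rightarrow> real) \<Rightarrow> real \<Rightarrow> real^'n^'n \<Rightarrow> real" where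
  "theta_a \<xi> \<alpha> x = x \<bullet> sgrad (xi_a \<xi> \<alpha>) x - xi_a \<xi> \<alpha> x"

definition unifU :: "real measure" where
  "unifU = uniform_measure lborel {0..<1}"

definition mono_paths :: "(real \<Rightarrow> real^'n^'n) set" where
  "mono_paths = {q. q \<in> borel_measurable borel \<and>
      (\<forall>u. u \<notin> {0..<1} \<longrightarrow> q u = 0) \<and>
      (\<forall>u\<in>{0..<1}. q u \<in> psd) \<and>
      (\<forall>u v. 0 \<le> u \<longrightarrow> u \<le> v \<longrightarrow> v < 1 \<longrightarrow> loewner_le (q u) (q v)) \<and>
      (\<forall>u\<in>{0..<1}. continuous (at_right u) q)}"

text \<open>Monotone measures with finite first moment (domain of psi).\<close>
definition monotone_measures :: "(real^'n^'n) measure set" where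
  "monotone_measures = {distr unifU borel q | q. q \<in> mono_paths \<and> integrable unifU (\<lambda>u. norm (q u))}"

definition P_up :: "(real^'n^'n \<Rightarrow> real) \<Rightarrow> real \<Rightarrow> (real^'n^'n) measure set" where
  "P_up \<xi> \<alpha> = {distr unifU borel (\<lambda>u. sgrad (xi_a \<xi> \<alpha>) (q u)) | q.
       q \<in> mono_paths \<and> (\<forall>u. norm (q u) \<le> 1)}"

definition W1 :: "(real^'n^'n) measure \<Rightarrow> (real^'n^'n) measure \<Rightarrow> ennreal" where
  "W1 \<mu> \<nu> = (INF \<pi>\<in>{\<pi>. prob_space \<pi> \<and> sets \<pi> = sets (borel \<Otimes>\<^sub>M borel) \<and>
        distr \<pi> borel fst = \<mu> \<and> distr \<pi> borel snd = \<nu>}.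
      \<integral>\<^sup>+ z. ennreal (norm (fst z - snd z)) \<partial>\<pi>)"

definition Lip0 :: "(real^'n^'n \<Rightarrow> real) set" where
  "Lip0 = {g. 1-lipschitz_on psd g \<and> g 0 = 0 \<and> (\<forall>x. x \<notin> psd \<longrightarrow> g x = 0)}"

definition S_tilde :: "(real^'n^'n \<Rightarrow> real) \<Rightarrow> real \<Rightarrow> real \<Rightarrow> (real^'n^'n \<Rightarrow> real) \<Rightarrow> real" where
  "S_tilde \<xi> \<alpha> t g = (SUP x\<in>cball 0 1 \<inter> psd. g (t *\<^sub>R sgrad (xi_a \<xi> \<alpha>) x) - t * theta_a \<xi> \<alpha> x)"

definition psi_star :: "((real^'n^'n) measure \<Rightarrow> real) \<Rightarrow> (real^'n^'n \<Rightarrow> real) \<Rightarrow> real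
    \<Rightarrow> (real^'n^'n \<Rightarrow> real) \<Rightarrow> real" where
  "psi_star \<psi> \<xi> \<alpha> g = (INF \<mu>\<in>P_up \<xi> \<alpha>. integral\<^sup>L \<mu> g - \<psi> \<mu>)"

end

theory Submission
  imports Defs
begin

(* On symmetric matrices the gradient of xi_alpha is grad xi(x) + 2 alpha x and
   theta_alpha(x) = theta_0(x) + alpha |x|^2, so on the unit ball both move by O(|alpha - beta|)
   when alpha changes. As chi is 1-Lipschitz, every term of the supremum defining
   S~^alpha_t chi(0) moves by at most 3 t |alpha - beta|. For psi^alpha_* the measures of
   P^up_{xi_alpha} are parametrised by the same paths q for every alpha; coupling
   grad xi_alpha(q(U)) with grad xi_beta(q(U)) shows that both int chi d mu and, by its
   W1-Lipschitz continuity, psi(mu) move by at most 2 |alpha - beta|. Suprema and infima of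
   uniformly close families are equally close, which gives the Lipschitz constant 3 t + 4;
   compactness of the unit ball keeps all these suprema and infima finite. *)

lemma cSUP_abs_diff_le:
  fixes f h :: "'a \<Rightarrow> real"
  assumes A: "A \<noteq> {}" and f_bdd: "bdd_above (f ` A)"
    and close: "\<And>x. x \<in> A \<Longrightarrow> \<bar>f x - h x\<bar> \<le> c"
  shows "\<bar>(SUP x\<in>A. f x) - (SUP x\<in>A. h x)\<bar> \<le> c"
proof -
  obtain B where B: "\<And>x. x \<in> A \<Longrightarrow> f x \<le> B"
    using f_bdd by (auto simp: bdd_above_def)
  have h_bdd: "bdd_above (h ` A)"
    by (rule bdd_aboveI2[where M = "B + c"]) (use B close in force)
  have "f x \<le> (SUP x\<in>A. h x) + c" if "x \<in> A" for x
    using close[OF that] cSUP_upper[OF that h_bdd] by linarith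
  then have "(SUP x\<in>A. f x) \<le> (SUP x\<in>A. h x) + c"
    by (rule cSUP_least[OF A])
  moreover have "h x \<le> (SUP x\<in>A. f x) + c" if "x \<in> A" for x
    using close[OF that] cSUP_upper[OF that f_bdd] by linarith
  then have "(SUP x\<in>A. h x) \<le> (SUP x\<in>A. f x) + c"
    by (rule cSUP_least[OF A])
  ultimately show ?thesis by linarith
qed

lemma cINF_abs_diff_le:
  fixes f h :: "'a \<Rightarrow> real"
  assumes "A \<noteq> {}" and "bdd_below (f ` A)"
    and "\<And>x. x \<in> A \<Longrightarrow> \<bar>f x - h x\<bar> \<le> c"
  shows "\<bar>(INF x\<in>A. f x) - (INF x\<in>A. h x)\<bar> \<le> c"
proof -
  have "\<bar>(SUP x\<in>A. - f x) - (SUP x\<in>A. - h x)\<bar> \<le> c"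
    using assms by (intro cSUP_abs_diff_le) (auto simp: bdd_above_uminus_image abs_minus_commute)
  then show ?thesis
    unfolding Inf_real_def image_image by linarith
qed

lemma (in prob_space) abs_integral_diff_le:
  fixes f h :: "'a \<Rightarrow> real"
  assumes f: "integrable M f" and h: "integrable M h"
    and close: "\<And>u. u \<in> space M \<Longrightarrow> \<bar>f u - h u\<bar> \<le> c"
  shows "\<bar>integral\<^sup>L M f - integral\<^sup>L M h\<bar> \<le> c"
proof -
  have "\<bar>integral\<^sup>L M f - integral\<^sup>L M h\<bar> = \<bar>\<integral>u. f u - h u \<partial>M\<bar>"
    using f h by simp
  also have "\<dots> \<le> (\<integral>u. \<bar>f u - h u\<bar> \<partial>M)"
    by (rule integral_abs_bound)
  also have "\<dots> \<le> c"
    using f h close by (intro integral_le_const AE_I2) auto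
  finally show ?thesis .
qed

lemma psd_symmetric: "A \<in> psd \<Longrightarrow> transpose A = A"
  by (simp add: psd_def)

lemma psd_zero: "0 \<in> psd"
  by (simp add: psd_def vec_eq_iff transpose_def)

lemma psd_add: "A \<in> psd \<Longrightarrow> B \<in> psd \<Longrightarrow> A + B \<in> psd"
  by (auto simp: psd_def vec_eq_iff transpose_def matrix_vector_mult_add_rdistrib inner_add_right)

lemma psd_scaleR: "A \<in> psd \<Longrightarrow> c \<ge> 0 \<Longrightarrow> c *\<^sub>R A \<in> psd"
  by (auto simp: psd_def transpose_scalar scaleR_matrix_vector_assoc[symmetric])

lemma zero_in_cball_Int_psd: "0 \<in> cball 0 1 \<inter> psd"
  by (simp add: psd_zero)

lemma closed_psd: "closed psd"
proof -
  have psd_eq: "psd = {A. \<forall>i j. A $ i $ j = A $ j $ i} \<inter> {A. \<forall>v. 0 \<le> v \<bullet> (A *v v)}"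
    by (auto simp: psd_def vec_eq_iff transpose_def)
  have "linear (\<lambda>A. v \<bullet> (A *v v))" for v :: "real^'n"
    by (rule linearI)
      (simp_all add: matrix_vector_mult_add_rdistrib inner_add_right scaleR_matrix_vector_assoc[symmetric])
  then have quadratic_form: "continuous_on UNIV (\<lambda>A. v \<bullet> (A *v v))" for v :: "real^'n"
    by (metis linear_continuous_on linear_conv_bounded_linear)
  show ?thesis
    unfolding psd_eq by (intro closed_Int closed_Collect_all closed_Collect_eq closed_Collect_le
        continuous_on_const quadratic_form continuous_intros)
qed

lemma sets_unifU [simp]: "sets unifU = sets borel"
  by (simp add: unifU_def)

lemma space_unifU [simp]: "space unifU = UNIV"
  by (simp add: unifU_def)

lemma measurable_unifU_eq: "measurable unifU N = measurable borel N"
  by (rule measurable_cong_sets) simp_all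

lemma prob_space_unifU: "prob_space unifU"
  unfolding unifU_def by (rule prob_space_uniform_measure) auto

lemma AE_unifU: "AE u in unifU. u \<in> {0..<1}"
  unfolding unifU_def by (subst AE_uniform_measure) auto

lemma W1_distr_le:
  fixes F G :: "'a \<Rightarrow> real^'n^'n"
  assumes "prob_space M" and F: "F \<in> M \<rightarrow>\<^sub>M borel" and G: "G \<in> M \<rightarrow>\<^sub>M borel"
    and close: "\<And>u. u \<in> space M \<Longrightarrow> norm (F u - G u) \<le> c"
  shows "W1 (distr M borel F) (distr M borel G) \<le> ennreal c"
proof -
  interpret prob_space M by fact
  have FG: "(\<lambda>u. (F u, G u)) \<in> M \<rightarrow>\<^sub>M borel \<Otimes>\<^sub>M borel"
    using F G by (rule measurable_Pair)
  define \<pi> where "\<pi> = distr M (borel \<Otimes>\<^sub>M borel) (\<lambda>u. (F u, G u))"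
  have "prob_space \<pi>"
    unfolding \<pi>_def using FG by (rule prob_space_distr)
  moreover have "distr \<pi> borel fst = distr M borel F" "distr \<pi> borel snd = distr M borel G"
    unfolding \<pi>_def using FG by (simp_all add: distr_distr comp_def)
  ultimately have "W1 (distr M borel F) (distr M borel G)
      \<le> (\<integral>\<^sup>+ z. ennreal (norm (fst z - snd z)) \<partial>\<pi>)"
    unfolding W1_def by (intro INF_lower) (simp add: \<pi>_def)
  also have "\<dots> = (\<integral>\<^sup>+ u. ennreal (norm (F u - G u)) \<partial>M)"
    unfolding \<pi>_def using FG by (subst nn_integral_distr) (simp_all add: borel_prod[symmetric])
  also have "\<dots> \<le> (\<integral>\<^sup>+ u. ennreal c \<partial>M)"
    using close by (intro nn_integral_mono) (simp add: ennreal_leI)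
  also have "\<dots> = ennreal c"
    by (simp add: emeasure_space_1)
  finally show ?thesis .
qed

lemma full_grad_xi_a:
  assumes "\<xi> differentiable at x"
  shows "full_grad (xi_a \<xi> \<alpha>) x = full_grad \<xi> x + (2 * \<alpha>) *\<^sub>R x"
proof -
  obtain D where D: "(\<xi> has_derivative D) (at x)"
    using assms by (auto simp: differentiable_def)
  have "(xi_a \<xi> \<alpha> has_derivative (\<lambda>h. D h + \<alpha> * (x \<bullet> h + h \<bullet> x))) (at x)"
    unfolding xi_a_def[abs_def] power2_norm_eq_inner
    by (intro has_derivative_add D has_derivative_mult_right has_derivative_inner has_derivative_ident)
  then show ?thesis
    using D by (simp add: full_grad_def vec_eq_iff inner_axis inner_axis' frechet_derivative_at[symmetric])
qed

lemma sgrad_xi_a: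
  assumes "\<xi> differentiable at x"
  shows "sgrad (xi_a \<xi> \<alpha>) x = sgrad \<xi> x + \<alpha> *\<^sub>R (x + transpose x)"
  using full_grad_xi_a[OF assms, of \<alpha>]
  by (simp add: sgrad_def vec_eq_iff transpose_def distrib_left)

lemma sgrad_xi_a_symmetric:
  assumes "\<xi> differentiable at x" and "transpose x = x"
  shows "sgrad (xi_a \<xi> \<alpha>) x = sgrad \<xi> x + (2 * \<alpha>) *\<^sub>R x"
  using assms by (simp add: sgrad_xi_a flip: scaleR_2)

lemma theta_a_eq:
  assumes "\<xi> differentiable at x" and "transpose x = x"
  shows "theta_a \<xi> \<alpha> x = x \<bullet> sgrad \<xi> x - \<xi> x + \<alpha> * (norm x)\<^sup>2"
  using assms by (simp add: theta_a_def sgrad_xi_a_symmetric xi_a_def inner_add_right power2_norm_eq_inner)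

lemma Lip0_abs_diff_le:
  "g \<in> Lip0 \<Longrightarrow> x \<in> psd \<Longrightarrow> y \<in> psd \<Longrightarrow> \<bar>g x - g y\<bar> \<le> norm (x - y)"
  using lipschitz_onD[of 1 psd g x y] by (auto simp: Lip0_def dist_real_def dist_norm)

lemma Lip0_abs_le: "g \<in> Lip0 \<Longrightarrow> x \<in> psd \<Longrightarrow> \<bar>g x\<bar> \<le> norm x"
  using Lip0_abs_diff_le[of g x 0] psd_zero by (simp add: Lip0_def)

lemma continuous_on_Lip0: "g \<in> Lip0 \<Longrightarrow> continuous_on psd g"
  by (auto simp: Lip0_def intro: lipschitz_on_continuous_on)

lemma borel_measurable_Lip0:
  assumes "g \<in> Lip0"
  shows "g \<in> borel_measurable borel"
proof -
  have "g = (\<lambda>x. if x \<in> psd then g x else 0)"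
    using assms by (auto simp: Lip0_def)
  also have "\<dots> \<in> borel_measurable borel"
    using assms closed_psd
    by (intro borel_measurable_continuous_on_if continuous_on_Lip0 continuous_on_const borel_closed)
  finally show ?thesis .
qed

lemma zero_in_Lip0: "(\<lambda>x. 0) \<in> Lip0"
  by (simp add: Lip0_def lipschitz_on_def)

definition unit_mono_paths :: "(real \<Rightarrow> real^'n^'n) set" where
  "unit_mono_paths = {q \<in> mono_paths. \<forall>u. norm (q u) \<le> 1}"

lemma mono_paths_psd: "q \<in> mono_paths \<Longrightarrow> q u \<in> psd"
  by (cases "u \<in> {0..<1}") (auto simp: mono_paths_def psd_zero)

lemma unit_mono_paths_psd: "q \<in> unit_mono_paths \<Longrightarrow> q u \<in> psd"
  by (simp add: unit_mono_paths_def mono_paths_psd)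

lemma unit_mono_paths_norm_le: "q \<in> unit_mono_paths \<Longrightarrow> norm (q u) \<le> 1"
  by (simp add: unit_mono_paths_def)

lemma zero_in_unit_mono_paths: "(\<lambda>u. 0) \<in> unit_mono_paths"
  by (auto simp: unit_mono_paths_def mono_paths_def psd_zero loewner_le_def)

lemma mono_paths_comp:
  assumes q: "q \<in> mono_paths" and f_cont: "continuous_on UNIV f"
    and f_psd: "\<And>x. x \<in> psd \<Longrightarrow> f x \<in> psd"
    and f_mono: "\<And>x y. x \<in> psd \<Longrightarrow> y \<in> psd \<Longrightarrow> loewner_le x y \<Longrightarrow> loewner_le (f x) (f y)"
  shows "(\<lambda>u. if u \<in> {0..<1} then f (q u) else 0) \<in> mono_paths" (is "?p \<in> _")
proof -
  have q_meas: "q \<in> borel_measurable borel"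
    and q_mono: "\<And>u v. 0 \<le> u \<Longrightarrow> u \<le> v \<Longrightarrow> v < 1 \<Longrightarrow> loewner_le (q u) (q v)"
    and q_cont: "\<And>u. u \<in> {0..<1} \<Longrightarrow> continuous (at_right u) q"
    using q by (simp_all add: mono_paths_def)
  have "?p \<in> borel_measurable borel"
    by (intro measurable_If_set borel_measurable_continuous_on[OF f_cont q_meas] measurable_const)
      simp_all
  moreover have "continuous (at_right u) ?p" if u: "u \<in> {0..<1}" for u
  proof -
    have "isCont f (q u)"
      using f_cont by (simp add: continuous_on_eq_continuous_at)
    then have "continuous (at_right u) (\<lambda>v. f (q v))"
      using q_cont[OF u] by (rule continuous_within_compose3)
    moreover have "\<forall>\<^sub>F v in at_right u. f (q v) = ?p v"
      using eventually_at_right_real[of u 1] u by (auto elim: eventually_mono)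
    ultimately show ?thesis
      using u by (simp add: continuous_within Lim_transform_eventually)
  qed
  moreover have "loewner_le (?p u) (?p v)" if "0 \<le> u" "u \<le> v" "v < 1" for u v
    using that q_mono f_mono mono_paths_psd[OF q] by simp
  moreover have "f (q u) \<in> psd" for u
    using f_psd mono_paths_psd[OF q] by simp
  ultimately show ?thesis
    unfolding mono_paths_def by simp
qed

locale monotone_potential =
  fixes \<xi> :: "real^'n^'n \<Rightarrow> real"
  assumes differentiable: "\<forall>x. \<xi> differentiable at x"
    and continuous_full_grad: "continuous_on UNIV (full_grad \<xi>)"
    and sgrad_psd: "\<forall>x\<in>psd. sgrad \<xi> x \<in> psd"
    and sgrad_mono: "\<forall>x\<in>psd. \<forall>y\<in>psd. loewner_le x y \<longrightarrow> loewner_le (sgrad \<xi> x) (sgrad \<xi> y)"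
begin

definition grad_a :: "real \<Rightarrow> real^'n^'n \<Rightarrow> real^'n^'n" where
  "grad_a \<alpha> x = sgrad \<xi> x + (2 * \<alpha>) *\<^sub>R x"

definition grad_law :: "real \<Rightarrow> (real \<Rightarrow> real^'n^'n) \<Rightarrow> (real^'n^'n) measure" where
  "grad_law \<alpha> q = distr unifU borel (\<lambda>u. grad_a \<alpha> (q u))"

lemma sgrad_xi_a_psd: "x \<in> psd \<Longrightarrow> sgrad (xi_a \<xi> \<alpha>) x = grad_a \<alpha> x"
  using differentiable by (simp add: grad_a_def sgrad_xi_a_symmetric psd_symmetric)

lemma theta_a_psd: "x \<in> psd \<Longrightarrow> theta_a \<xi> \<alpha> x = x \<bullet> sgrad \<xi> x - \<xi> x + \<alpha> * (norm x)\<^sup>2"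
  using differentiable by (simp add: theta_a_eq psd_symmetric)

lemma continuous_on_xi: "continuous_on UNIV \<xi>"
  using differentiable by (simp add: continuous_at_imp_continuous_on differentiable_imp_continuous_within)

lemma continuous_on_sgrad: "continuous_on UNIV (sgrad \<xi>)"
proof -
  have "continuous_on UNIV (\<lambda>x. transpose (full_grad \<xi> x))"
    unfolding transpose_def by (intro continuous_intros continuous_on_compose2[OF continuous_full_grad]) auto
  then show ?thesis
    unfolding sgrad_def[abs_def] by (intro continuous_intros continuous_full_grad)
qed

lemma continuous_on_grad_a: "continuous_on UNIV (grad_a \<alpha>)"
  unfolding grad_a_def[abs_def] by (intro continuous_intros continuous_on_sgrad)

lemma grad_a_psd: "x \<in> psd \<Longrightarrow> \<alpha> \<ge> 0 \<Longrightarrow> grad_a \<alpha> x \<in> psd"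
  using sgrad_psd by (simp add: grad_a_def psd_add psd_scaleR)

lemma grad_a_loewner_mono:
  assumes "x \<in> psd" "y \<in> psd" "loewner_le x y" "\<alpha> \<ge> 0"
  shows "loewner_le (grad_a \<alpha> x) (grad_a \<alpha> y)"
proof -
  have "grad_a \<alpha> y - grad_a \<alpha> x = (sgrad \<xi> y - sgrad \<xi> x) + (2 * \<alpha>) *\<^sub>R (y - x)"
    by (simp add: grad_a_def algebra_simps)
  then show ?thesis
    using assms sgrad_mono by (simp add: loewner_le_def psd_add psd_scaleR)
qed

lemma norm_grad_a_diff: "norm (grad_a \<alpha> x - grad_a \<beta> x) = 2 * \<bar>\<alpha> - \<beta>\<bar> * norm x"
proof -
  have "grad_a \<alpha> x - grad_a \<beta> x = (2 * (\<alpha> - \<beta>)) *\<^sub>R x"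
    by (simp add: grad_a_def algebra_simps)
  then show ?thesis by (simp only: norm_scaleR abs_mult)
qed

lemma grad_a_bounded: "\<exists>B. \<forall>x. norm x \<le> 1 \<longrightarrow> norm (grad_a \<alpha> x) \<le> B"
proof -
  have "compact (grad_a \<alpha> ` cball 0 1)"
    by (intro compact_continuous_image continuous_on_subset[OF continuous_on_grad_a]) auto
  then obtain B where "\<forall>y\<in>grad_a \<alpha> ` cball 0 1. norm y \<le> B"
    by (auto dest!: compact_imp_bounded simp: bounded_iff)
  then show ?thesis
    by (intro exI[of _ B]) (auto simp: mem_cball_0)
qed

lemma abs_Lip0_grad_a_diff_le:
  assumes "g \<in> Lip0" "x \<in> psd" "norm x \<le> 1" "\<alpha> \<ge> 0" "\<beta> \<ge> 0" "t \<ge> 0"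
  shows "\<bar>g (t *\<^sub>R grad_a \<alpha> x) - g (t *\<^sub>R grad_a \<beta> x)\<bar> \<le> 2 * t * \<bar>\<alpha> - \<beta>\<bar>"
proof -
  have "\<bar>g (t *\<^sub>R grad_a \<alpha> x) - g (t *\<^sub>R grad_a \<beta> x)\<bar> \<le> t * norm (grad_a \<alpha> x - grad_a \<beta> x)"
    using Lip0_abs_diff_le[of g "t *\<^sub>R grad_a \<alpha> x" "t *\<^sub>R grad_a \<beta> x"] assms
    by (simp add: grad_a_psd psd_scaleR scaleR_diff_right[symmetric])
  also have "\<dots> = 2 * t * (norm x * \<bar>\<alpha> - \<beta>\<bar>)"
    by (simp add: norm_grad_a_diff)
  also have "\<dots> \<le> 2 * t * \<bar>\<alpha> - \<beta>\<bar>"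
    using assms by (intro mult_left_mono mult_left_le_one_le) auto
  finally show ?thesis .
qed

lemma bdd_above_S_tilde:
  assumes g: "g \<in> Lip0" and "\<alpha> \<ge> 0" "t \<ge> 0"
  shows "bdd_above ((\<lambda>x. g (t *\<^sub>R sgrad (xi_a \<xi> \<alpha>) x) - t * theta_a \<xi> \<alpha> x) ` (cball 0 1 \<inter> psd))"
proof -
  let ?K = "cball 0 1 \<inter> psd"
  have "continuous_on ?K (\<lambda>x. g (t *\<^sub>R grad_a \<alpha> x) - t * (x \<bullet> sgrad \<xi> x - \<xi> x + \<alpha> * (norm x)\<^sup>2))"
    using assms
    by (intro continuous_intros continuous_on_compose2[OF continuous_on_Lip0[OF g]]
        continuous_on_subset[OF continuous_on_grad_a] continuous_on_subset[OF continuous_on_sgrad]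
        continuous_on_subset[OF continuous_on_xi]) (auto simp: grad_a_psd psd_scaleR)
  also have "?this \<longleftrightarrow>
      continuous_on ?K (\<lambda>x. g (t *\<^sub>R sgrad (xi_a \<xi> \<alpha>) x) - t * theta_a \<xi> \<alpha> x)"
    by (intro continuous_on_cong) (auto simp: sgrad_xi_a_psd theta_a_psd)
  finally have "continuous_on ?K (\<lambda>x. g (t *\<^sub>R sgrad (xi_a \<xi> \<alpha>) x) - t * theta_a \<xi> \<alpha> x)" .
  moreover have "compact ?K"
    by (intro compact_Int_closed compact_cball closed_psd)
  ultimately show ?thesis
    by (intro bounded_imp_bdd_above compact_imp_bounded compact_continuous_image)
qed

lemma S_tilde_abs_diff_le:
  assumes g: "g \<in> Lip0" and "\<alpha> \<ge> 0" "\<beta> \<ge> 0" "t \<ge> 0"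
  shows "\<bar>S_tilde \<xi> \<alpha> t g - S_tilde \<xi> \<beta> t g\<bar> \<le> 3 * t * \<bar>\<alpha> - \<beta>\<bar>"
  unfolding S_tilde_def
proof (rule cSUP_abs_diff_le[OF _ bdd_above_S_tilde[OF assms(1,2,4)]])
  show "cball 0 1 \<inter> psd \<noteq> {}"
    using zero_in_cball_Int_psd by blast
  fix x :: "real^'n^'n" assume x: "x \<in> cball 0 1 \<inter> psd"
  have "\<bar>(\<alpha> - \<beta>) * (norm x)\<^sup>2\<bar> \<le> \<bar>\<alpha> - \<beta>\<bar>"
    using x by (simp add: abs_mult mult_left_le power_le_one)
  then have "\<bar>t * theta_a \<xi> \<alpha> x - t * theta_a \<xi> \<beta> x\<bar> \<le> t * \<bar>\<alpha> - \<beta>\<bar>"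
    using x assms by (simp add: theta_a_psd right_diff_distrib[symmetric] left_diff_distrib[symmetric]
        abs_mult mult_left_mono)
  moreover have "\<bar>g (t *\<^sub>R grad_a \<alpha> x) - g (t *\<^sub>R grad_a \<beta> x)\<bar> \<le> 2 * t * \<bar>\<alpha> - \<beta>\<bar>"
    using x assms by (intro abs_Lip0_grad_a_diff_le) auto
  ultimately show "\<bar>g (t *\<^sub>R sgrad (xi_a \<xi> \<alpha>) x) - t * theta_a \<xi> \<alpha> x
      - (g (t *\<^sub>R sgrad (xi_a \<xi> \<beta>) x) - t * theta_a \<xi> \<beta> x)\<bar> \<le> 3 * t * \<bar>\<alpha> - \<beta>\<bar>"
    using x by (simp add: sgrad_xi_a_psd)
qed

lemma borel_measurable_grad_a_path:
  "q \<in> mono_paths \<Longrightarrow> (\<lambda>u. grad_a \<alpha> (q u)) \<in> borel_measurable borel"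
  by (intro borel_measurable_continuous_on[OF continuous_on_grad_a]) (simp add: mono_paths_def)

lemma grad_law_monotone:
  assumes q: "q \<in> unit_mono_paths" and \<alpha>: "\<alpha> \<ge> 0"
  shows "grad_law \<alpha> q \<in> monotone_measures"
proof -
  interpret prob_space unifU by (rule prob_space_unifU)
  (* grad_a \<alpha> 0 need not vanish, so the path is cut off outside [0,1) as mono_paths
     requires; this changes it only on a null set of unifU. *)
  define p where "p u = (if u \<in> {0..<1} then grad_a \<alpha> (q u) else 0)" for u
  have p: "p \<in> mono_paths"
    unfolding p_def[abs_def] using q \<alpha>
    by (intro mono_paths_comp continuous_on_grad_a grad_a_psd grad_a_loewner_mono)
      (simp_all add: unit_mono_paths_def)
  then have p_meas: "p \<in> borel_measurable unifU"
    by (simp add: mono_paths_def measurable_unifU_eq)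
  obtain B where B: "\<And>x. norm x \<le> 1 \<Longrightarrow> norm (grad_a \<alpha> x) \<le> B"
    using grad_a_bounded by blast
  have "norm (p u) \<le> B" for u
    using B[of 0] B[OF unit_mono_paths_norm_le[OF q]] by (simp add: p_def order_trans[OF norm_ge_zero])
  then have "integrable unifU (\<lambda>u. norm (p u))"
    using p_meas by (intro integrable_const_bound[where B = B] AE_I2) simp_all
  moreover have "distr unifU borel p = grad_law \<alpha> q"
    unfolding grad_law_def using p_meas borel_measurable_grad_a_path[of q \<alpha>] q AE_unifU
    by (intro distr_cong_AE) (auto simp: p_def measurable_unifU_eq unit_mono_paths_def)
  ultimately show ?thesis
    unfolding monotone_measures_def using p by (auto intro!: exI[of _ p])
qed

lemma P_up_eq: "P_up \<xi> \<alpha> = grad_law \<alpha> ` unit_mono_paths"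
proof -
  have "distr unifU borel (\<lambda>u. sgrad (xi_a \<xi> \<alpha>) (q u)) = grad_law \<alpha> q" if "q \<in> mono_paths" for q
    using that by (simp add: grad_law_def sgrad_xi_a_psd mono_paths_psd)
  then show ?thesis
    unfolding P_up_def unit_mono_paths_def by (auto simp: image_def) metis
qed

lemma integral_grad_law:
  assumes "g \<in> Lip0" and "q \<in> mono_paths"
  shows "integral\<^sup>L (grad_law \<alpha> q) g = (\<integral>u. g (grad_a \<alpha> (q u)) \<partial>unifU)"
  unfolding grad_law_def using assms
  by (intro integral_distr)
    (simp_all add: measurable_unifU_eq borel_measurable_grad_a_path borel_measurable_Lip0)

lemma integrable_Lip0_grad_a:
  assumes g: "g \<in> Lip0" and q: "q \<in> unit_mono_paths" and \<alpha>: "\<alpha> \<ge> 0"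
  shows "integrable unifU (\<lambda>u. g (grad_a \<alpha> (q u)))"
proof -
  interpret prob_space unifU by (rule prob_space_unifU)
  obtain B where B: "\<And>x. norm x \<le> 1 \<Longrightarrow> norm (grad_a \<alpha> x) \<le> B"
    using grad_a_bounded by blast
  have "\<bar>g (grad_a \<alpha> (q u))\<bar> \<le> B" for u
    using Lip0_abs_le[OF g grad_a_psd[OF unit_mono_paths_psd[OF q, of u] \<alpha>]]
      B[OF unit_mono_paths_norm_le[OF q, of u]] by linarith
  moreover have "(\<lambda>u. g (grad_a \<alpha> (q u))) \<in> borel_measurable unifU"
    using q unfolding measurable_unifU_eq unit_mono_paths_def
    by (intro measurable_compose[OF borel_measurable_grad_a_path borel_measurable_Lip0[OF g]]) simp
  ultimately show ?thesis
    by (intro integrable_const_bound[where B = B] AE_I2) simp_all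
qed

lemma S_tilde_at_zero_le:
  assumes g: "g \<in> Lip0" and "\<alpha> \<ge> 0" "t \<ge> 0"
  shows "g (t *\<^sub>R sgrad \<xi> 0) + t * \<xi> 0 \<le> S_tilde \<xi> \<alpha> t g"
  using cSUP_upper[OF zero_in_cball_Int_psd bdd_above_S_tilde[OF assms]]
  unfolding S_tilde_def by (simp add: sgrad_xi_a_psd theta_a_psd grad_a_def psd_zero)

end

locale W1_lipschitz_potential = monotone_potential \<xi> for \<xi> :: "real^'n^'n \<Rightarrow> real" +
  fixes \<psi> :: "(real^'n^'n) measure \<Rightarrow> real"
  assumes psi_W1_lipschitz: "\<forall>\<mu>\<in>monotone_measures. \<forall>\<nu>\<in>monotone_measures.
    ennreal \<bar>\<psi> \<mu> - \<psi> \<nu>\<bar> \<le> W1 \<mu> \<nu>"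
begin

lemma abs_psi_grad_law_diff_le:
  assumes q: "q \<in> unit_mono_paths" and q': "q' \<in> unit_mono_paths" and "\<alpha> \<ge> 0" "\<beta> \<ge> 0"
    and close: "\<And>u. norm (grad_a \<alpha> (q u) - grad_a \<beta> (q' u)) \<le> c"
  shows "\<bar>\<psi> (grad_law \<alpha> q) - \<psi> (grad_law \<beta> q')\<bar> \<le> c"
proof -
  have "ennreal \<bar>\<psi> (grad_law \<alpha> q) - \<psi> (grad_law \<beta> q')\<bar> \<le> W1 (grad_law \<alpha> q) (grad_law \<beta> q')"
    using psi_W1_lipschitz grad_law_monotone assms by blast
  also have "\<dots> \<le> ennreal c"
    unfolding grad_law_def using q q' close
    by (intro W1_distr_le prob_space_unifU)
      (simp_all add: measurable_unifU_eq borel_measurable_grad_a_path unit_mono_paths_def)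
  finally show ?thesis
    using order_trans[OF norm_ge_zero close] by simp
qed

lemma psi_star_eq:
  assumes "g \<in> Lip0"
  shows "psi_star \<psi> \<xi> \<alpha> g
    = (INF q\<in>unit_mono_paths. (\<integral>u. g (grad_a \<alpha> (q u)) \<partial>unifU) - \<psi> (grad_law \<alpha> q))"
  unfolding psi_star_def P_up_eq image_image using assms
  by (intro INF_cong refl) (simp add: integral_grad_law unit_mono_paths_def)

lemma bdd_below_psi_star:
  assumes g: "g \<in> Lip0" and \<alpha>: "\<alpha> \<ge> 0"
  shows "bdd_below ((\<lambda>q. (\<integral>u. g (grad_a \<alpha> (q u)) \<partial>unifU) - \<psi> (grad_law \<alpha> q)) ` unit_mono_paths)"
proof -
  interpret prob_space unifU by (rule prob_space_unifU)
  obtain B where B: "\<And>x. norm x \<le> 1 \<Longrightarrow> norm (grad_a \<alpha> x) \<le> B"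
    using grad_a_bounded by blast
  have "- B - (\<psi> (grad_law \<alpha> (\<lambda>u. 0)) + 2 * B)
      \<le> (\<integral>u. g (grad_a \<alpha> (q u)) \<partial>unifU) - \<psi> (grad_law \<alpha> q)" if q: "q \<in> unit_mono_paths" for q
  proof -
    note q_le = unit_mono_paths_norm_le[OF q]
    have "- B \<le> g (grad_a \<alpha> (q u))" for u
      using Lip0_abs_le[OF g grad_a_psd[OF unit_mono_paths_psd[OF q, of u] \<alpha>]] B[OF q_le[of u]]
      by arith
    then have "- B \<le> (\<integral>u. g (grad_a \<alpha> (q u)) \<partial>unifU)"
      by (intro integral_ge_const AE_I2 integrable_Lip0_grad_a[OF g q \<alpha>])
    moreover have "\<bar>\<psi> (grad_law \<alpha> q) - \<psi> (grad_law \<alpha> (\<lambda>u. 0))\<bar> \<le> 2 * B"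
    proof (rule abs_psi_grad_law_diff_le[OF q zero_in_unit_mono_paths \<alpha> \<alpha>])
      fix u
      show "norm (grad_a \<alpha> (q u) - grad_a \<alpha> 0) \<le> 2 * B"
        using norm_triangle_ineq4[of "grad_a \<alpha> (q u)" "grad_a \<alpha> 0"] B[OF q_le[of u]] B[of 0] by simp
    qed
    ultimately show ?thesis by linarith
  qed
  then show ?thesis by (rule bdd_belowI2)
qed

lemma psi_star_abs_diff_le:
  assumes g: "g \<in> Lip0" and \<alpha>: "\<alpha> \<ge> 0" and \<beta>: "\<beta> \<ge> 0"
  shows "\<bar>psi_star \<psi> \<xi> \<alpha> g - psi_star \<psi> \<xi> \<beta> g\<bar> \<le> 4 * \<bar>\<alpha> - \<beta>\<bar>"
  unfolding psi_star_eq[OF g]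
proof (rule cINF_abs_diff_le[OF _ bdd_below_psi_star[OF g \<alpha>]])
  show "unit_mono_paths \<noteq> {}"
    using zero_in_unit_mono_paths by blast
  fix q :: "real \<Rightarrow> real^'n^'n" assume q: "q \<in> unit_mono_paths"
  have "\<bar>g (grad_a \<alpha> (q u)) - g (grad_a \<beta> (q u))\<bar> \<le> 2 * \<bar>\<alpha> - \<beta>\<bar>" for u
    using abs_Lip0_grad_a_diff_le[of g "q u" \<alpha> \<beta> 1] g \<alpha> \<beta>
    by (simp add: unit_mono_paths_psd[OF q] unit_mono_paths_norm_le[OF q])
  then have "\<bar>(\<integral>u. g (grad_a \<alpha> (q u)) \<partial>unifU) - (\<integral>u. g (grad_a \<beta> (q u)) \<partial>unifU)\<bar>
      \<le> 2 * \<bar>\<alpha> - \<beta>\<bar>"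
    by (intro prob_space.abs_integral_diff_le[OF prob_space_unifU]
        integrable_Lip0_grad_a[OF g q \<alpha>] integrable_Lip0_grad_a[OF g q \<beta>])
  moreover have "\<bar>\<psi> (grad_law \<alpha> q) - \<psi> (grad_law \<beta> q)\<bar> \<le> 2 * \<bar>\<alpha> - \<beta>\<bar>"
  proof (rule abs_psi_grad_law_diff_le[OF q q \<alpha> \<beta>])
    fix u
    show "norm (grad_a \<alpha> (q u) - grad_a \<beta> (q u)) \<le> 2 * \<bar>\<alpha> - \<beta>\<bar>"
      using unit_mono_paths_norm_le[OF q, of u] by (simp add: norm_grad_a_diff mult_left_le)
  qed
  ultimately show "\<bar>(\<integral>u. g (grad_a \<alpha> (q u)) \<partial>unifU) - \<psi> (grad_law \<alpha> q)
      - ((\<integral>u. g (grad_a \<beta> (q u)) \<partial>unifU) - \<psi> (grad_law \<beta> q))\<bar> \<le> 4 * \<bar>\<alpha> - \<beta>\<bar>"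
    by linarith
qed

lemma bdd_below_S_tilde_minus_psi_star:
  assumes \<alpha>: "\<alpha> \<ge> 0" and t: "t \<ge> 0"
  shows "bdd_below ((\<lambda>g. S_tilde \<xi> \<alpha> t g - psi_star \<psi> \<xi> \<alpha> g) ` Lip0)"
proof (rule bdd_belowI2)
  interpret prob_space unifU by (rule prob_space_unifU)
  let ?z = "sgrad \<xi> 0"
  fix g :: "real^'n^'n \<Rightarrow> real" assume g: "g \<in> Lip0"
  have z: "?z \<in> psd"
    using sgrad_psd psd_zero by blast
  have "t *\<^sub>R ?z - ?z = (t - 1) *\<^sub>R ?z"
    by (simp add: algebra_simps)
  then have "\<bar>g (t *\<^sub>R ?z) - g ?z\<bar> \<le> \<bar>t - 1\<bar> * norm ?z"
    using Lip0_abs_diff_le[OF g psd_scaleR[OF z t] z] by simp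
  moreover have "psi_star \<psi> \<xi> \<alpha> g \<le> g ?z - \<psi> (grad_law \<alpha> (\<lambda>u. 0))"
    using cINF_lower[OF bdd_below_psi_star[OF g \<alpha>] zero_in_unit_mono_paths]
    by (simp add: psi_star_eq[OF g] grad_a_def prob_space[simplified])
  ultimately show "- \<bar>t - 1\<bar> * norm ?z + t * \<xi> 0 + \<psi> (grad_law \<alpha> (\<lambda>u. 0))
      \<le> S_tilde \<xi> \<alpha> t g - psi_star \<psi> \<xi> \<alpha> g"
    using S_tilde_at_zero_le[OF g \<alpha> t] by linarith
qed

lemma lipschitz_on_INF_S_tilde_minus_psi_star:
  assumes t: "t \<ge> 0"
  shows "(3 * t + 4)-lipschitz_on {0..} (\<lambda>\<alpha>. INF g\<in>Lip0. S_tilde \<xi> \<alpha> t g - psi_star \<psi> \<xi> \<alpha> g)"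
    (is "_-lipschitz_on _ ?F")
proof (rule lipschitz_onI)
  fix \<alpha> \<beta> :: real
  assume "\<alpha> \<in> {0..}" "\<beta> \<in> {0..}"
  then have \<alpha>: "\<alpha> \<ge> 0" and \<beta>: "\<beta> \<ge> 0" by auto
  have "\<bar>?F \<alpha> - ?F \<beta>\<bar> \<le> (3 * t + 4) * \<bar>\<alpha> - \<beta>\<bar>"
  proof (rule cINF_abs_diff_le[OF _ bdd_below_S_tilde_minus_psi_star[OF \<alpha> t]])
    show "Lip0 \<noteq> {}"
      using zero_in_Lip0 by blast
    fix g :: "real^'n^'n \<Rightarrow> real" assume g: "g \<in> Lip0"
    show "\<bar>S_tilde \<xi> \<alpha> t g - psi_star \<psi> \<xi> \<alpha> g - (S_tilde \<xi> \<beta> t g - psi_star \<psi> \<xi> \<beta> g)\<bar>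
        \<le> (3 * t + 4) * \<bar>\<alpha> - \<beta>\<bar>"
      using S_tilde_abs_diff_le[OF g \<alpha> \<beta> t] psi_star_abs_diff_le[OF g \<alpha> \<beta>]
      by (simp add: distrib_right)
  qed
  then show "dist (?F \<alpha>) (?F \<beta>) \<le> (3 * t + 4) * dist \<alpha> \<beta>"
    by (simp add: dist_real_def)
qed (use t in simp)

end

theorem proposition6p4:
  fixes \<xi> :: "real^'n^'n \<Rightarrow> real"
    and \<psi> :: "(real^'n^'n) measure \<Rightarrow> real"
    and t :: real
  assumes power_series: "\<exists>c::(('n \<times> 'n \<Rightarrow> nat) \<Rightarrow> real). \<forall>x. (\<lambda>k. norm (c k * monom_mat x k)) summable_on UNIV
                                 \<and> \<xi> x = (\<Sum>\<^sub>\<infinity>k. c k * monom_mat x k)"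
    and smooth: "\<forall>x. \<xi> differentiable at x" "continuous_on UNIV (full_grad \<xi>)"
    and convex: "convex_on psd \<xi>"
    and grad_psd: "\<forall>x\<in>psd. sgrad \<xi> x \<in> psd"
    and grad_mono: "\<forall>x\<in>psd. \<forall>y\<in>psd. loewner_le x y \<longrightarrow> loewner_le (sgrad \<xi> x) (sgrad \<xi> y)"
    and psi_lip: "\<forall>\<mu>\<in>monotone_measures. \<forall>\<nu>\<in>monotone_measures.
                    ennreal \<bar>\<psi> \<mu> - \<psi> \<nu>\<bar> \<le> W1 \<mu> \<nu>"
    and t: "t \<ge> 0"
  shows "\<exists>L. L-lipschitz_on {0..}
           (\<lambda>\<alpha>. INF g\<in>Lip0. S_tilde \<xi> \<alpha> t g - psi_star \<psi> \<xi> \<alpha> g)"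
proof -
  interpret W1_lipschitz_potential \<xi> \<psi>
    using smooth grad_psd grad_mono psi_lip by unfold_locales auto
  show ?thesis
    using lipschitz_on_INF_S_tilde_minus_psi_star[OF t] by blast
qed

end
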